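(* Let $\alpha_1, \alpha_2 \in \mathbb{R}$ be the two roots of an irreducible quadratic polynomial in $\mathbb{Q}[x]$ with $0 < \alpha_1 < 1 < \alpha_2$, and let $M' = \big\{ \sum_{i \in I} c_i (\alpha_1^i, \alpha_2^i) \mid c_i \in \mathbb{N}_0,\ I \subseteq \mathbb{Z},\ |I| < \infty \big\} \subseteq \mathbb{R}^2$. If $(v_1,v_2) \in M'$, then the set $M' \cap ([0,v_1] \times [0,v_2])$ is finite.
   Context: $M'$ is the image of $M_{\alpha_1} = \{f(\alpha_1) \mid f \in \mathbb{N}_0[x,x^{-1}]\}$ under the $\mathbb{Q}$-algebra embedding $\mathbb{Q}(\alpha_1) \to \mathbb{R}^2$, $x \mapsto (\sigma_1(x),\sigma_2(x))$, where $\sigma_i$ sends $\alpha_1 \mapsto \alpha_i$. *)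

theory Defs
  imports "HOL-Analysis.Analysis" "HOL-Computational_Algebra.Polynomial"
begin

definition Mprime :: "real \<Rightarrow> real \<Rightarrow> (real \<times> real) set" where
  "Mprime a1 a2 = {(\<Sum>i\<in>I. of_nat (c i) * a1 powi i, \<Sum>i\<in>I. of_nat (c i) * a2 powi i) |
      (I :: int set) (c :: int \<Rightarrow> nat). finite I}"

end

theory Submission
  imports Defs
begin

text \<open>A point of \<open>M'\<close> in the box \<open>[0, v\<^sub>1] \<times> [0, v\<^sub>2]\<close> is a nonnegative combination whose
  every term lies in the box too. Since \<open>\<alpha>\<^sub>1 < 1 < \<alpha>\<^sub>2\<close>, a term \<open>c (\<alpha>\<^sub>1\<^sup>i, \<alpha>\<^sub>2\<^sup>i)\<close> with \<open>c \<ge> 1\<close>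
  can stay in the box only for the finitely many \<open>i\<close> with \<open>\<alpha>\<^sub>1\<^sup>i \<le> v\<^sub>1\<close> and \<open>\<alpha>\<^sub>2\<^sup>i \<le> v\<^sub>2\<close>, and
  since one of \<open>\<alpha>\<^sub>1\<^sup>i, \<alpha>\<^sub>2\<^sup>i\<close> is at least 1, its coefficient is at most \<open>max v\<^sub>1 v\<^sub>2\<close>. So only
  finitely many coefficient vectors occur.\<close>

lemma finite_bounded_combinations:
  fixes f g :: "'i \<Rightarrow> 'a :: semiring_1" and B :: nat
  assumes "finite K"
  shows "finite {(\<Sum>i\<in>I. of_nat (c i) * f i, \<Sum>i\<in>I. of_nat (c i) * g i) | I c.
                  finite I \<and> (\<forall>i\<in>I. c i \<noteq> 0 \<longrightarrow> i \<in> K \<and> c i \<le> B)}"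
    (is "finite ?S")
proof -
  define F where "F = {c. \<forall>i. (i \<in> K \<longrightarrow> c i \<in> {0..B}) \<and> (i \<notin> K \<longrightarrow> c i = 0)}"
  have "finite F"
    unfolding F_def by (rule finite_set_of_finite_funs) (use assms in auto)
  moreover have "?S \<subseteq> (\<lambda>c. (\<Sum>i\<in>K. of_nat (c i) * f i, \<Sum>i\<in>K. of_nat (c i) * g i)) ` F"
  proof
    fix z assume "z \<in> ?S"
    then obtain I c where I: "finite I" and c: "\<forall>i\<in>I. c i \<noteq> 0 \<longrightarrow> i \<in> K \<and> c i \<le> B"
      and z: "z = (\<Sum>i\<in>I. of_nat (c i) * f i, \<Sum>i\<in>I. of_nat (c i) * g i)"
      by blast
    define c' where "c' i = (if i \<in> I then c i else 0)" for i
    have restrict: "(\<Sum>i\<in>I. of_nat (c i) * h i) = (\<Sum>i\<in>K. of_nat (c' i) * h i)"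
      for h :: "'i \<Rightarrow> 'a"
    proof -
      have "(\<Sum>i\<in>I. of_nat (c i) * h i) = (\<Sum>i\<in>I \<union> K. of_nat (c' i) * h i)"
        by (rule sum.mono_neutral_cong_left) (use I assms c in \<open>auto simp: c'_def\<close>)
      also have "\<dots> = (\<Sum>i\<in>K. of_nat (c' i) * h i)"
        by (rule sum.mono_neutral_right) (use I assms c in \<open>auto simp: c'_def\<close>)
      finally show ?thesis .
    qed
    have "c' \<in> F"
      using c by (auto simp: F_def c'_def)
    then show "z \<in> (\<lambda>c. (\<Sum>i\<in>K. of_nat (c i) * f i, \<Sum>i\<in>K. of_nat (c i) * g i)) ` F"
      unfolding z restrict by blast
  qed
  ultimately show ?thesis
    using finite_subset by blast
qed

lemma powi_le_imp_less:
  fixes b v :: real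
  assumes "1 < b"
  shows "\<exists>N. \<forall>i. b powi i \<le> v \<longrightarrow> i < N"
proof -
  obtain n where n: "v < b ^ n"
    using real_arch_pow[OF assms] by blast
  have "i < int n" if "b powi i \<le> v" for i
  proof (rule ccontr)
    assume "\<not> i < int n"
    then have "b ^ n \<le> b powi i"
      using power_int_increasing[of "int n" i b] assms by simp
    with n that show False by simp
  qed
  then show ?thesis by blast
qed

lemma finite_powi_le:
  fixes a b u v :: real
  assumes "0 < a" "a < 1" "1 < b"
  shows "finite {i. a powi i \<le> u \<and> b powi i \<le> v}"
proof -
  have "1 < inverse a"
    using assms by (simp add: one_less_inverse)
  then obtain M where M: "\<And>i. inverse a powi i \<le> u \<Longrightarrow> i < M"
    using powi_le_imp_less by blast
  obtain N where N: "\<And>i. b powi i \<le> v \<Longrightarrow> i < N"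
    using powi_le_imp_less[OF assms(3)] by blast
  have "{i. a powi i \<le> u \<and> b powi i \<le> v} \<subseteq> {- M<..<N}"
  proof
    fix i assume "i \<in> {i. a powi i \<le> u \<and> b powi i \<le> v}"
    then have "inverse a powi (- i) \<le> u" "b powi i \<le> v"
      by (simp_all add: power_int_minus power_int_inverse)
    from M[OF this(1)] N[OF this(2)] show "i \<in> {- M<..<N}"
      by simp
  qed
  then show ?thesis
    by (rule finite_subset) simp
qed

lemma one_le_powi_either:
  fixes a b :: "'a :: linordered_field" and i :: int
  assumes "0 < a" "a \<le> 1" "1 \<le> b"
  shows "1 \<le> a powi i \<or> 1 \<le> b powi i"
proof (cases "0 \<le> i")
  case False
  have "1 \<le> inverse a powi (- i)"
    using False assms by (intro one_le_power_int) (auto simp: one_le_inverse)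
  then show ?thesis
    by (simp add: power_int_minus power_int_inverse)
qed (use assms in simp)

lemma powi_term_bounds:
  fixes a b v1 v2 :: real and c :: nat
  assumes "0 < a" "a \<le> 1" "1 \<le> b" "c \<noteq> 0"
    and "of_nat c * a powi i \<le> v1" "of_nat c * b powi i \<le> v2"
  shows "a powi i \<le> v1 \<and> b powi i \<le> v2 \<and> real c \<le> max v1 v2"
proof -
  have c_ge: "1 \<le> real c"
    using assms(4) by simp
  have "a powi i \<le> of_nat c * a powi i" "b powi i \<le> of_nat c * b powi i"
    using mult_right_mono[OF c_ge, of "a powi i"] mult_right_mono[OF c_ge, of "b powi i"] assms(1,3)
    by simp_all
  moreover have "real c \<le> of_nat c * a powi i \<or> real c \<le> of_nat c * b powi i"
    using one_le_powi_either[of a b i] assms(1-3) by (auto simp: mult_le_cancel_left1)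
  ultimately show ?thesis
    using assms(5,6) by linarith
qed

lemma finite_Mprime_box:
  fixes a b v1 v2 :: real
  assumes "0 < a" "a < 1" "1 < b"
  shows "finite (Mprime a b \<inter> ({0..v1} \<times> {0..v2}))"
proof -
  define K where "K = {i. a powi i \<le> v1 \<and> b powi i \<le> v2}"
  define B where "B = nat \<lceil>max v1 v2\<rceil>"
  have "Mprime a b \<inter> ({0..v1} \<times> {0..v2}) \<subseteq>
    {(\<Sum>i\<in>I. of_nat (c i) * a powi i, \<Sum>i\<in>I. of_nat (c i) * b powi i) | I c.
      finite I \<and> (\<forall>i\<in>I. c i \<noteq> 0 \<longrightarrow> i \<in> K \<and> c i \<le> B)}"
  proof
    fix z assume "z \<in> Mprime a b \<inter> ({0..v1} \<times> {0..v2})"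
    then obtain I c where I: "finite I"
      and z: "z = (\<Sum>i\<in>I. of_nat (c i) * a powi i, \<Sum>i\<in>I. of_nat (c i) * b powi i)"
      and sum_le: "(\<Sum>i\<in>I. of_nat (c i) * a powi i) \<le> v1" "(\<Sum>i\<in>I. of_nat (c i) * b powi i) \<le> v2"
      unfolding Mprime_def by auto
    have "i \<in> K \<and> c i \<le> B" if i: "i \<in> I" "c i \<noteq> 0" for i
    proof -
      have "of_nat (c i) * a powi i \<le> (\<Sum>j\<in>I. of_nat (c j) * a powi j)"
           "of_nat (c i) * b powi i \<le> (\<Sum>j\<in>I. of_nat (c j) * b powi j)"
        by (rule member_le_sum; use I i assms in simp)+
      with sum_le have "of_nat (c i) * a powi i \<le> v1" "of_nat (c i) * b powi i \<le> v2"
        by linarith+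
      with assms i(2) have "a powi i \<le> v1 \<and> b powi i \<le> v2 \<and> real (c i) \<le> max v1 v2"
        by (intro powi_term_bounds) auto
      then have "i \<in> K" and "real (c i) \<le> max v1 v2"
        by (simp_all add: K_def)
      moreover from this(2) have "c i \<le> B"
        unfolding B_def by linarith
      ultimately show ?thesis by blast
    qed
    with I z show "z \<in> {(\<Sum>i\<in>I. of_nat (c i) * a powi i, \<Sum>i\<in>I. of_nat (c i) * b powi i) | I c.
      finite I \<and> (\<forall>i\<in>I. c i \<noteq> 0 \<longrightarrow> i \<in> K \<and> c i \<le> B)}"
      by blast
  qed
  moreover have "finite K"
    unfolding K_def using assms by (rule finite_powi_le)
  ultimately show ?thesis
    by (intro finite_subset[OF _ finite_bounded_combinations])
qed

theorem lemma4p6: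
  fixes p :: "rat poly" and a1 a2 v1 v2 :: real
  assumes "degree p = 2" and "irreducible p"
    and "poly (map_poly of_rat p) a1 = 0" and "poly (map_poly of_rat p) a2 = 0"
    and "a1 \<noteq> a2"
    and "0 < a1" and "a1 < 1" and "1 < a2"
    and "(v1, v2) \<in> Mprime a1 a2"
  shows "finite (Mprime a1 a2 \<inter> ({0..v1} \<times> {0..v2}))"
  using \<open>0 < a1\<close> \<open>a1 < 1\<close> \<open>1 < a2\<close> by (rule finite_Mprime_box)

end
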